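(* Let $n\geq 1$ and let $X_n$ and $S_1,\dots,S_n$ be as described in the context. If $A$ is a dense subset of $X_n$, then there exists $i\in\{1,\dots,n\}$ such that $A\cap S_i$ is non-empty and open in the subspace $S_i$.
   Context: Let $\mathcal{U}$ be a non-principal ultrafilter on $\omega$, and let $E$ be the space with underlying set $\omega$ whose open sets are the members of $\mathcal{U}$ together with $\emptyset$. For $n\ge 1$, let $X_n$ be the space with underlying set $\omega\times\{1,\dots,n\}$ whose open sets are $\emptyset$ together with all sets of the form $\bigcup_{i=1}^n (O_i\times\{i\})$ where each $O_i$ is a non-empty open subset of $E$. Let $S_i=\omega\times\{i\}$ with the subspace topology from $X_n$. *)

theory Defs
  imports "HOL-Analysis.Analysis"
begin

definition ultrafilter_on_nat :: "nat set set \<Rightarrow> bool" where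
  "ultrafilter_on_nat U \<longleftrightarrow>
     {} \<notin> U \<and> UNIV \<in> U \<and>
     (\<forall>A B. A \<in> U \<longrightarrow> B \<in> U \<longrightarrow> A \<inter> B \<in> U) \<and>
     (\<forall>A B. A \<in> U \<longrightarrow> A \<subseteq> B \<longrightarrow> B \<in> U) \<and>
     (\<forall>A. A \<in> U \<or> - A \<in> U)"

text \<open>Non-principal: no singleton (equivalently no finite set) belongs to U.\<close>
definition nonprincipal_ultrafilter_on_nat :: "nat set set \<Rightarrow> bool" where
  "nonprincipal_ultrafilter_on_nat U \<longleftrightarrow> ultrafilter_on_nat U \<and> (\<forall>k. {k} \<notin> U)"

definition E_space :: "nat set set \<Rightarrow> nat topology" where
  "E_space U = topology (\<lambda>W. W = {} \<or> W \<in> U)"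

definition X_space :: "nat set set \<Rightarrow> nat \<Rightarrow> (nat \<times> nat) topology" where
  "X_space U n = topology (\<lambda>V. V = {} \<or>
     (\<exists>Q. (\<forall>i\<in>{1..n}. openin (E_space U) (Q i) \<and> Q i \<noteq> {}) \<and>
          V = (\<Union>i\<in>{1..n}. Q i \<times> {i})))"

definition S_space :: "nat set set \<Rightarrow> nat \<Rightarrow> nat \<Rightarrow> (nat \<times> nat) topology" where
  "S_space U n i = subtopology (X_space U n) (UNIV \<times> {i})"

end

theory Submission
  imports Defs
begin

text \<open>An open set of \<open>X\<^sub>n\<close> is determined by its layers \<open>{x. (x, i) \<in> V}\<close>, which must all
  lie in the ultrafilter unless \<open>V\<close> is empty. If \<open>A\<close> is dense, not all complements of the
  layers of \<open>A\<close> can lie in \<open>U\<close>, for otherwise they would form a non-empty open set missing \<open>A\<close>.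
  Hence some layer \<open>A\<^sub>i\<close> lies in \<open>U\<close>, i.e. \<open>A \<inter> S\<^sub>i\<close> is non-empty and open in \<open>S\<^sub>i\<close>.\<close>

definition layer :: "('a \<times> 'b) set \<Rightarrow> 'b \<Rightarrow> 'a set" where
  "layer V i = {x. (x, i) \<in> V}"

lemma layer_Int [simp]: "layer (S \<inter> T) i = layer S i \<inter> layer T i"
  by (auto simp: layer_def)

lemma layer_times_singleton [simp]: "layer (A \<times> {j}) i = (if i = j then A else {})"
  by (auto simp: layer_def)

lemma layer_UN_times_singleton:
  "i \<in> I \<Longrightarrow> layer (\<Union>j\<in>I. Q j \<times> {j}) i = Q i"
  by (auto simp: layer_def)

lemma UN_layer_eq:
  assumes "V \<subseteq> UNIV \<times> I"
  shows "(\<Union>i\<in>I. layer V i \<times> {i}) = V"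
  using assms by (auto simp: layer_def)

lemma ultrafilter_on_natD:
  assumes "ultrafilter_on_nat U"
  shows ultrafilter_empty: "{} \<notin> U"
    and ultrafilter_UNIV: "UNIV \<in> U"
    and ultrafilter_Int: "A \<in> U \<Longrightarrow> B \<in> U \<Longrightarrow> A \<inter> B \<in> U"
    and ultrafilter_mono: "A \<in> U \<Longrightarrow> A \<subseteq> B \<Longrightarrow> B \<in> U"
    and ultrafilter_Compl: "A \<notin> U \<Longrightarrow> - A \<in> U"
  using assms unfolding ultrafilter_on_nat_def by blast+

lemma openin_E_space:
  assumes U: "ultrafilter_on_nat U"
  shows "openin (E_space U) W \<longleftrightarrow> W = {} \<or> W \<in> U"
proof -
  have "istopology (\<lambda>W. W = {} \<or> W \<in> U)"
    unfolding istopology_def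
  proof (intro conjI allI impI)
    fix S T :: "nat set"
    assume "S = {} \<or> S \<in> U" "T = {} \<or> T \<in> U"
    then show "S \<inter> T = {} \<or> S \<inter> T \<in> U"
      using ultrafilter_Int[OF U] by blast
  next
    fix K :: "nat set set"
    assume K: "\<forall>W\<in>K. W = {} \<or> W \<in> U"
    show "\<Union>K = {} \<or> \<Union>K \<in> U"
    proof (cases "\<Union>K = {}")
      case False
      then obtain W where "W \<in> K" "W \<noteq> {}"
        by auto
      with K show ?thesis
        using ultrafilter_mono[OF U, of W "\<Union>K"] by blast
    qed simp
  qed
  then show ?thesis
    unfolding E_space_def by simp
qed

definition layered_open :: "nat set set \<Rightarrow> nat \<Rightarrow> (nat \<times> nat) set \<Rightarrow> bool" where
  "layered_open U n V \<longleftrightarrow> V = {} \<or> (V \<subseteq> UNIV \<times> {1..n} \<and> (\<forall>i\<in>{1..n}. layer V i \<in> U))"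

lemma istopology_layered_open:
  assumes U: "ultrafilter_on_nat U"
  shows "istopology (layered_open U n)"
  unfolding istopology_def
proof (intro conjI allI impI)
  fix S T
  assume "layered_open U n S" "layered_open U n T"
  then show "layered_open U n (S \<inter> T)"
    unfolding layered_open_def using ultrafilter_Int[OF U] by auto
next
  fix K
  assume K: "\<forall>V\<in>K. layered_open U n V"
  show "layered_open U n (\<Union>K)"
  proof (cases "\<Union>K = {}")
    case False
    then obtain V where V: "V \<in> K" "V \<noteq> {}"
      by auto
    have "layer V i \<in> U" if "i \<in> {1..n}" for i
      using K V that unfolding layered_open_def by blast
    moreover have "layer V i \<subseteq> layer (\<Union>K) i" for i
      using V(1) by (auto simp: layer_def)
    ultimately have "\<forall>i\<in>{1..n}. layer (\<Union>K) i \<in> U"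
      using ultrafilter_mono[OF U] by blast
    moreover have "\<Union>K \<subseteq> UNIV \<times> {1..n}"
      using K unfolding layered_open_def by blast
    ultimately show ?thesis
      unfolding layered_open_def by blast
  qed (simp add: layered_open_def)
qed

lemma openin_X_space:
  assumes U: "ultrafilter_on_nat U"
  shows "openin (X_space U n) V \<longleftrightarrow> layered_open U n V"
proof -
  have layered: "(\<exists>Q. (\<forall>i\<in>{1..n}. openin (E_space U) (Q i) \<and> Q i \<noteq> {}) \<and>
             V = (\<Union>i\<in>{1..n}. Q i \<times> {i}))
        \<longleftrightarrow> V \<subseteq> UNIV \<times> {1..n} \<and> (\<forall>i\<in>{1..n}. layer V i \<in> U)" for V
  proof
    assume "\<exists>Q. (\<forall>i\<in>{1..n}. openin (E_space U) (Q i) \<and> Q i \<noteq> {}) \<and>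
                V = (\<Union>i\<in>{1..n}. Q i \<times> {i})"
    then show "V \<subseteq> UNIV \<times> {1..n} \<and> (\<forall>i\<in>{1..n}. layer V i \<in> U)"
      by (auto simp: openin_E_space[OF U] layer_UN_times_singleton)
  next
    assume "V \<subseteq> UNIV \<times> {1..n} \<and> (\<forall>i\<in>{1..n}. layer V i \<in> U)"
    then show "\<exists>Q. (\<forall>i\<in>{1..n}. openin (E_space U) (Q i) \<and> Q i \<noteq> {}) \<and>
                   V = (\<Union>i\<in>{1..n}. Q i \<times> {i})"
      by (intro exI[of _ "layer V"])
        (auto simp: openin_E_space[OF U] ultrafilter_empty[OF U] UN_layer_eq)
  qed
  have "X_space U n = topology (layered_open U n)"
    unfolding X_space_def layered_open_def by (simp only: layered)
  then show ?thesis
    using istopology_layered_open[OF U] by simp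
qed

lemma openin_S_space:
  assumes U: "ultrafilter_on_nat U" and i: "i \<in> {1..n}"
  shows "openin (S_space U n i) W \<longleftrightarrow> W \<subseteq> UNIV \<times> {i} \<and> (W = {} \<or> layer W i \<in> U)"
proof
  assume "openin (S_space U n i) W"
  then obtain V where "layered_open U n V" "W = V \<inter> UNIV \<times> {i}"
    unfolding S_space_def openin_subtopology openin_X_space[OF U] by blast
  then show "W \<subseteq> UNIV \<times> {i} \<and> (W = {} \<or> layer W i \<in> U)"
    using i by (auto simp: layered_open_def)
next
  assume W: "W \<subseteq> UNIV \<times> {i} \<and> (W = {} \<or> layer W i \<in> U)"
  show "openin (S_space U n i) W"
  proof (cases "W = {}")
    case False
    define V where "V = W \<union> UNIV \<times> ({1..n} - {i})"
    have "layer V j = (if j = i then layer W i else UNIV)" if "j \<in> {1..n}" for j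
      using W that by (auto simp: V_def layer_def)
    then have "layered_open U n V"
      using W False i ultrafilter_UNIV[OF U] by (auto simp: layered_open_def V_def)
    moreover have "W = V \<inter> UNIV \<times> {i}"
      using W by (auto simp: V_def)
    ultimately show ?thesis
      unfolding S_space_def openin_subtopology openin_X_space[OF U] by blast
  qed simp
qed

lemma dense_X_space_layer_in_ultrafilter:
  assumes U: "ultrafilter_on_nat U" and "n \<ge> 1"
    and dense: "X_space U n closure_of A = topspace (X_space U n)"
  shows "\<exists>i\<in>{1..n}. layer A i \<in> U"
proof (rule ccontr)
  assume "\<not> ?thesis"
  then have Compl: "\<forall>i\<in>{1..n}. - layer A i \<in> U"
    using ultrafilter_Compl[OF U] by blast
  define T where "T = UNIV \<times> {1..n} - A"
  have layer_T: "layer T i \<in> U" if "i \<in> {1..n}" for i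
    using Compl that by (auto simp: T_def layer_def Compl_eq)
  then have "openin (X_space U n) T"
    by (auto simp: openin_X_space[OF U] layered_open_def T_def)
  moreover have "T \<noteq> {}"
    using layer_T[of 1] \<open>n \<ge> 1\<close> ultrafilter_empty[OF U] by (auto simp: layer_def)
  ultimately show False
    using dense by (auto simp: dense_intersects_open T_def)
qed

theorem lemma6:
  fixes U :: "nat set set" and n :: nat and A :: "(nat \<times> nat) set"
  assumes "nonprincipal_ultrafilter_on_nat U"
    and "n \<ge> 1"
    and "A \<subseteq> topspace (X_space U n)"
    and "(X_space U n) closure_of A = topspace (X_space U n)"
  shows "\<exists>i\<in>{1..n}. A \<inter> (UNIV \<times> {i}) \<noteq> {} \<and>
           openin (S_space U n i) (A \<inter> (UNIV \<times> {i}))"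
proof -
  have U: "ultrafilter_on_nat U"
    using assms(1) unfolding nonprincipal_ultrafilter_on_nat_def by simp
  obtain i where i: "i \<in> {1..n}" "layer A i \<in> U"
    using dense_X_space_layer_in_ultrafilter[OF U assms(2,4)] by blast
  have "layer A i \<noteq> {}"
    using i(2) ultrafilter_empty[OF U] by auto
  then have "A \<inter> UNIV \<times> {i} \<noteq> {}"
    by (auto simp: layer_def)
  moreover have "openin (S_space U n i) (A \<inter> UNIV \<times> {i})"
    using i(2) by (simp add: openin_S_space[OF U i(1)])
  ultimately show ?thesis
    using i(1) by blast
qed

end
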